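(* For all $n,k\in\mathbb N$ there exists $N\in\mathbb N$ such that every finite strongly connected digraph $D$ on at least $N$ vertices contains one of the following: (1) a dicycle on at least $n$ vertices; (2) an $n$-narrow semi-chain $(C_1,C_2,\ldots,C_k)$ of $k$ dicycles; (3) an $n$-short $(m,1)$-system of dipaths for some $m\ge (k-1)n+3$.
   Context: All digraphs are finite; a dipath is a directed path, a dicycle a directed cycle, and lengths count edges. A sequence $(C_1,\ldots,C_k)$ of dicycles is a semi-chain if for all $1\le i,j\le k$ we have $V(C_i)\cap V(C_j)\ne\emptyset$ if and only if $|i-j|=1$; it is $n$-narrow if $|V(C_i)|<n$ for every $i$. Let $x,y$ be two, possibly equal, vertices and $m,\ell$ positive integers. An $(m,\ell)$-system of $x$--$y$ dipaths is a system of $m+\ell$ internally disjoint dipaths (or dicycles through $x$ in case $x=y$), $m$ of which are $x$--$y$ dipaths and $\ell$ of which are $y$--$x$ dipaths; an $(m,\ell)$-system of dipaths is such a system for some $x,y$. It is $n$-short if, in case $x\ne y$, $|V(P)\cup V(Q)|<n$ for every $x$--$y$ dipath $P$ and every $y$--$x$ dipath $Q$ of the system, and, in case $x=y$, every dicycle of the system has length less than $n$. *)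

theory Defs
  imports Main
begin

text \<open>A (finite) digraph is given by a vertex set V and an arc relation E with E \<subseteq> V \<times> V.
  Dipaths and dicycles are represented as lists of distinct vertices.\<close>

definition dipath :: "('a \<times> 'a) set \<Rightarrow> 'a list \<Rightarrow> bool" where
  "dipath E P \<longleftrightarrow> P \<noteq> [] \<and> distinct P \<and>
     (\<forall>i. Suc i < length P \<longrightarrow> (P ! i, P ! Suc i) \<in> E)"

definition dicycle :: "('a \<times> 'a) set \<Rightarrow> 'a list \<Rightarrow> bool" where
  "dicycle E C \<longleftrightarrow> dipath E C \<and> (last C, hd C) \<in> E"

definition strongly_connected :: "'a set \<Rightarrow> ('a \<times> 'a) set \<Rightarrow> bool" where
  "strongly_connected V E \<longleftrightarrow> (\<forall>u\<in>V. \<forall>v\<in>V. (u, v) \<in> E\<^sup>*)"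

definition semi_chain :: "('a \<times> 'a) set \<Rightarrow> 'a list list \<Rightarrow> bool" where
  "semi_chain E Cs \<longleftrightarrow> (\<forall>C\<in>set Cs. dicycle E C) \<and>
     (\<forall>i<length Cs. \<forall>j<length Cs. i \<noteq> j \<longrightarrow>
        (set (Cs ! i) \<inter> set (Cs ! j) \<noteq> {} \<longleftrightarrow> (i = Suc j \<or> j = Suc i)))"

definition narrow :: "nat \<Rightarrow> 'a list list \<Rightarrow> bool" where
  "narrow n Cs \<longleftrightarrow> (\<forall>C\<in>set Cs. card (set C) < n)"

definition interior :: "'a list \<Rightarrow> 'a set" where
  "interior P = set (butlast (tl P))"

text \<open>An (m,l)-system of x--y dipaths: Ps lists m+l distinct, internally disjoint objects;
  the first m are x--y dipaths and the last l are y--x dipaths (x \<noteq> y), or, if x = y,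
  all of them are dicycles through x (written starting at x) pairwise meeting only in x.\<close>
definition dipath_system ::
  "('a \<times> 'a) set \<Rightarrow> 'a \<Rightarrow> 'a \<Rightarrow> nat \<Rightarrow> nat \<Rightarrow> 'a list list \<Rightarrow> bool" where
  "dipath_system E x y m l Ps \<longleftrightarrow> 0 < m \<and> 0 < l \<and> length Ps = m + l \<and> distinct Ps \<and>
     (if x = y then
        (\<forall>P\<in>set Ps. dicycle E P \<and> hd P = x) \<and>
        (\<forall>i<m+l. \<forall>j<m+l. i \<noteq> j \<longrightarrow> set (Ps ! i) \<inter> set (Ps ! j) = {x})
      else
        (\<forall>i<m. dipath E (Ps ! i) \<and> hd (Ps ! i) = x \<and> last (Ps ! i) = y) \<and>
        (\<forall>i. m \<le> i \<and> i < m + l \<longrightarrow> dipath E (Ps ! i) \<and> hd (Ps ! i) = y \<and> last (Ps ! i) = x) \<and>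
        (\<forall>i<m+l. \<forall>j<m+l. i \<noteq> j \<longrightarrow> interior (Ps ! i) \<inter> interior (Ps ! j) = {}))"

definition short_system :: "nat \<Rightarrow> 'a \<Rightarrow> 'a \<Rightarrow> nat \<Rightarrow> nat \<Rightarrow> 'a list list \<Rightarrow> bool" where
  "short_system n x y m l Ps \<longleftrightarrow>
     (if x = y then (\<forall>P\<in>set Ps. length P < n)
      else (\<forall>i<m. \<forall>j. m \<le> j \<and> j < m + l \<longrightarrow> card (set (Ps ! i) \<union> set (Ps ! j)) < n))"

end

theory Submission
  imports Defs
begin

text \<open>
  Suppose every dicycle has fewer than n vertices and put M = k n + 3.

  If some vertex r has more than n M^n out-neighbours, fix an in-tree of shortest dipaths
  towards r. For every out-neighbour y of r, the arc r y followed by the tree path from y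
  is a dicycle, so these tree paths have fewer than n vertices. Their union is a tree of
  depth less than n with more than n M^n vertices, so some vertex z has more than M
  children in it. Tree paths through distinct children of z are disjoint above z; started
  at r and ended at z, they form together with the tree path from z back to r an
  (m,1)-system (a system of dicycles through r if z = r). It is n-short because each of
  its r-z dipaths, together with the return path, lies on one of the dicycles above.

  Otherwise all out-degrees are at most n M^n + 1, so a large digraph has a vertex v at
  distance at least k n from a fixed vertex x. Every arc lies on a dicycle, so x and v are
  joined by a chain of dicycles in which consecutive members meet. A shortest such chain
  is a semi-chain, and because each member has fewer than n vertices it has at least
  k members.
\<close>

section \<open>Trees of bounded depth and branching\<close>

lemma card_level_le:
  fixes d :: "'a \<Rightarrow> nat"
  assumes "finite S"
    and root: "\<And>u v. u \<in> S \<Longrightarrow> v \<in> S \<Longrightarrow> d u = 0 \<Longrightarrow> d v = 0 \<Longrightarrow> u = v"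
    and parent: "\<And>v. v \<in> S \<Longrightarrow> 0 < d v \<Longrightarrow> p v \<in> S \<and> Suc (d (p v)) = d v"
    and branching: "\<And>u. card {v \<in> S. 0 < d v \<and> p v = u} \<le> M"
  shows "card {v \<in> S. d v = j} \<le> M ^ j"
proof (induction j)
  case 0
  show ?case
    using root \<open>finite S\<close> by (simp add: card_le_Suc0_iff_eq)
next
  case (Suc j)
  have "{v \<in> S. d v = Suc j} \<subseteq> (\<Union>u \<in> {v \<in> S. d v = j}. {v \<in> S. 0 < d v \<and> p v = u})"
    using parent by fastforce
  then have "card {v \<in> S. d v = Suc j} \<le> card (\<Union>u \<in> {v \<in> S. d v = j}. {v \<in> S. 0 < d v \<and> p v = u})"
    using \<open>finite S\<close> by (intro card_mono) auto
  also have "\<dots> \<le> (\<Sum>u \<in> {v \<in> S. d v = j}. card {v \<in> S. 0 < d v \<and> p v = u})"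
    by (rule card_UN_le) (simp add: \<open>finite S\<close>)
  also have "\<dots> \<le> card {v \<in> S. d v = j} * M"
    using sum_bounded_above[of _ "\<lambda>u. card {v \<in> S. 0 < d v \<and> p v = u}"] branching by simp
  also have "\<dots> \<le> M ^ Suc j"
    using Suc.IH by (simp add: mult.commute)
  finally show ?case .
qed

lemma card_le_if_bounded_depth_and_branching:
  fixes d :: "'a \<Rightarrow> nat"
  assumes "finite S" "1 \<le> M"
    and depth: "\<And>v. v \<in> S \<Longrightarrow> d v < n"
    and root: "\<And>u v. u \<in> S \<Longrightarrow> v \<in> S \<Longrightarrow> d u = 0 \<Longrightarrow> d v = 0 \<Longrightarrow> u = v"
    and parent: "\<And>v. v \<in> S \<Longrightarrow> 0 < d v \<Longrightarrow> p v \<in> S \<and> Suc (d (p v)) = d v"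
    and branching: "\<And>u. card {v \<in> S. 0 < d v \<and> p v = u} \<le> M"
  shows "card S \<le> n * M ^ n"
proof -
  have "S = (\<Union>j<n. {v \<in> S. d v = j})"
    using depth by auto
  then have "card S \<le> (\<Sum>j<n. card {v \<in> S. d v = j})"
    by (metis card_UN_le finite_lessThan)
  also have "\<dots> \<le> (\<Sum>j<n. M ^ n)"
  proof (rule sum_mono)
    fix j assume "j \<in> {..<n}"
    have "card {v \<in> S. d v = j} \<le> M ^ j"
      using assms(1) root parent branching by (rule card_level_le)
    also have "\<dots> \<le> M ^ n"
      using \<open>j \<in> {..<n}\<close> \<open>1 \<le> M\<close> by (simp add: power_increasing)
    finally show "card {v \<in> S. d v = j} \<le> M ^ n" .
  qed
  finally show ?thesis by simp
qed

section \<open>Dipaths and systems of dipaths\<close>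

lemma dipath_map_upt:
  assumes "0 < L" "inj_on f {0..<L}" "\<And>i. Suc i < L \<Longrightarrow> (f i, f (Suc i)) \<in> E"
  shows "dipath E (map f [0..<L])"
  using assms unfolding dipath_def by (auto simp: distinct_map)

lemma dipath_take:
  assumes "dipath E P" "0 < j"
  shows "dipath E (take j P)"
  using assms unfolding dipath_def by auto

lemma dipath_Cons:
  assumes "dipath E P" "a \<notin> set P" "(a, hd P) \<in> E"
  shows "dipath E (a # P)"
  using assms unfolding dipath_def by (auto simp: nth_Cons hd_conv_nth split: nat.splits)

lemma dipath_snoc:
  assumes "dipath E P" "a \<notin> set P" "(last P, a) \<in> E"
  shows "dipath E (P @ [a])"
  using assms unfolding dipath_def
  by (auto simp: nth_append last_conv_nth less_Suc_eq) (metis diff_Suc_Suc minus_nat.diff_0)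

lemma dicycle_Cons:
  assumes "dipath E P" "a \<notin> set P" "(a, hd P) \<in> E" "(last P, a) \<in> E"
  shows "dicycle E (a # P)"
  using assms dipath_Cons[OF assms(1-3)] unfolding dicycle_def by (simp add: dipath_def)

lemma dicycle_length_eq_card: "dicycle E C \<Longrightarrow> length C = card (set C)"
  by (simp add: dicycle_def dipath_def distinct_card)

lemma distinct_if_disjoint:
  assumes "\<And>B. B \<in> set Bs \<Longrightarrow> B \<noteq> []"
    and "\<And>i j. i < length Bs \<Longrightarrow> j < length Bs \<Longrightarrow> i \<noteq> j \<Longrightarrow> set (Bs ! i) \<inter> set (Bs ! j) = {}"
  shows "distinct Bs"
  unfolding distinct_conv_nth using assms by (metis Int_absorb nth_mem set_empty)

lemma dipath_system_of_cycles:
  assumes "length Bs = Suc m" "0 < m"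
    and Bs: "\<And>B. B \<in> set Bs \<Longrightarrow> dipath E B \<and> x \<notin> set B \<and> (x, hd B) \<in> E \<and> (last B, x) \<in> E"
    and disjoint: "\<And>i j. i < length Bs \<Longrightarrow> j < length Bs \<Longrightarrow> i \<noteq> j \<Longrightarrow> set (Bs ! i) \<inter> set (Bs ! j) = {}"
  shows "dipath_system E x x m 1 (map ((#) x) Bs)"
proof -
  have "distinct Bs"
    using Bs disjoint by (intro distinct_if_disjoint) (auto simp: dipath_def)
  moreover have "dicycle E (x # B)" if "B \<in> set Bs" for B
    using Bs[OF that] by (intro dicycle_Cons) auto
  moreover have "set (x # Bs ! i) \<inter> set (x # Bs ! j) = {x}" if "i < Suc m" "j < Suc m" "i \<noteq> j" for i j
    using disjoint[of i j] that \<open>length Bs = Suc m\<close> by auto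
  ultimately show ?thesis
    using assms(1,2) by (auto simp: dipath_system_def distinct_map)
qed

lemma interior_Cons_snoc [simp]: "interior (x # P @ [z]) = set P"
  by (simp add: interior_def)

lemma interior_subset: "interior P \<subseteq> set P"
  by (cases P) (auto simp: interior_def dest: in_set_butlastD)

lemma dipath_system_of_paths:
  assumes "x \<noteq> z" "length Bs = m" "0 < m"
    and Q: "dipath E Q" "hd Q = z" "last Q = x"
    and Bs: "\<And>B. B \<in> set Bs \<Longrightarrow> dipath E B \<and> (x, hd B) \<in> E \<and> (last B, z) \<in> E \<and> set B \<inter> set Q = {}"
    and disjoint: "\<And>i j. i < length Bs \<Longrightarrow> j < length Bs \<Longrightarrow> i \<noteq> j \<Longrightarrow> set (Bs ! i) \<inter> set (Bs ! j) = {}"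
  shows "dipath_system E x z m 1 (map (\<lambda>B. x # B @ [z]) Bs @ [Q])"
proof -
  let ?Ps = "map (\<lambda>B. x # B @ [z]) Bs @ [Q]"
  have xz: "x \<in> set Q" "z \<in> set Q"
    using Q by (auto simp: dipath_def)
  have path: "dipath E (x # B @ [z])" if "B \<in> set Bs" for B
  proof -
    have "dipath E (B @ [z])"
      using Bs[OF that] xz by (intro dipath_snoc) auto
    then show ?thesis
      using Bs[OF that] xz \<open>x \<noteq> z\<close> by (intro dipath_Cons) (auto simp: dipath_def)
  qed
  have "distinct Bs"
    using Bs disjoint by (intro distinct_if_disjoint) (auto simp: dipath_def)
  moreover have "Q \<notin> set (map (\<lambda>B. x # B @ [z]) Bs)"
  proof
    assume "Q \<in> set (map (\<lambda>B. x # B @ [z]) Bs)"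
    then have "hd Q = x"
      by auto
    with Q(2) \<open>x \<noteq> z\<close> show False
      by simp
  qed
  ultimately have "distinct ?Ps"
    by (simp add: distinct_map inj_on_def)
  have nth: "?Ps ! i = (if i < m then x # Bs ! i @ [z] else Q)" if "i < m + 1" for i
    using that \<open>length Bs = m\<close> by (auto simp: nth_append)
  have interior: "interior (?Ps ! i) \<subseteq> (if i < m then set (Bs ! i) else set Q)" if "i < m + 1" for i
    using nth[OF that] interior_subset[of Q] by (cases "i < m") auto
  have "interior (?Ps ! i) \<inter> interior (?Ps ! j) = {}" if "i < m + 1" "j < m + 1" "i \<noteq> j" for i j
  proof -
    have "(if i < m then set (Bs ! i) else set Q) \<inter> (if j < m then set (Bs ! j) else set Q) = {}"
      using that disjoint[of i j] Bs[OF nth_mem, of i] Bs[OF nth_mem, of j] \<open>length Bs = m\<close>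
      by (cases "i < m"; cases "j < m") (simp_all add: Int_commute)
    with interior[OF that(1)] interior[OF that(2)] show ?thesis
      by blast
  qed
  moreover have "\<forall>i<m. dipath E (?Ps ! i) \<and> hd (?Ps ! i) = x \<and> last (?Ps ! i) = z"
    using nth path \<open>length Bs = m\<close> by simp
  moreover have "\<forall>i. m \<le> i \<and> i < m + 1 \<longrightarrow> dipath E (?Ps ! i) \<and> hd (?Ps ! i) = z \<and> last (?Ps ! i) = x"
    using nth Q by auto
  ultimately show ?thesis
    using \<open>distinct ?Ps\<close> assms(1-3) by (simp add: dipath_system_def)
qed

lemma short_system_of_cycles:
  assumes "\<And>B. B \<in> set Bs \<Longrightarrow> length (x # B) < n"
  shows "short_system n x x m 1 (map ((#) x) Bs)"
  using assms by (auto simp: short_system_def)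

lemma short_system_of_paths:
  assumes "x \<noteq> z" "length Bs = m" "z \<in> set Q"
    and "\<And>B. B \<in> set Bs \<Longrightarrow> card (insert x (set B) \<union> set Q) < n"
  shows "short_system n x z m 1 (map (\<lambda>B. x # B @ [z]) Bs @ [Q])"
proof -
  have "card (set (x # Bs ! i @ [z]) \<union> set Q) < n" if "i < m" for i
    using assms(2-4) that by (simp add: insert_absorb)
  then show ?thesis
    using assms(1,2) by (auto simp: short_system_def nth_append)
qed

section \<open>Shortest-path in-trees\<close>

locale root_reachable =
  fixes V :: "'a set" and E :: "('a \<times> 'a) set" and r :: 'a
  assumes arcs_in: "E \<subseteq> V \<times> V" and root_in: "r \<in> V"
    and reaches_root: "v \<in> V \<Longrightarrow> (v, r) \<in> E\<^sup>*"
begin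

definition depth :: "'a \<Rightarrow> nat" where
  "depth v = (LEAST i. (v, r) \<in> E ^^ i)"

definition parent :: "'a \<Rightarrow> 'a" where
  "parent v = (if v = r then r else SOME w. (v, w) \<in> E \<and> (w, r) \<in> E ^^ (depth v - 1))"

definition tree_path :: "'a \<Rightarrow> 'a list" where
  "tree_path v = map (\<lambda>t. (parent ^^ t) v) [0..<Suc (depth v)]"

lemma relpow_depth: "v \<in> V \<Longrightarrow> (v, r) \<in> E ^^ depth v"
  unfolding depth_def using reaches_root by (metis LeastI rtrancl_power)

lemma depth_le: "(v, r) \<in> E ^^ i \<Longrightarrow> depth v \<le> i"
  unfolding depth_def by (rule Least_le)

lemma depth_root [simp]: "depth r = 0"
  using depth_le[of r 0] by simp

lemma depth_eq_0_iff: "v \<in> V \<Longrightarrow> depth v = 0 \<longleftrightarrow> v = r"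
  using relpow_depth by fastforce

lemma parent_spec:
  assumes "v \<in> V" "v \<noteq> r"
  shows "(v, parent v) \<in> E \<and> (parent v, r) \<in> E ^^ (depth v - 1)"
proof -
  have "Suc (depth v - 1) = depth v"
    using depth_eq_0_iff[OF assms(1)] assms(2) by simp
  then have "(v, r) \<in> E ^^ Suc (depth v - 1)"
    using relpow_depth assms(1) by simp
  then have "\<exists>w. (v, w) \<in> E \<and> (w, r) \<in> E ^^ (depth v - 1)"
    by (rule relpow_Suc_D2)
  from someI_ex[OF this] show ?thesis
    unfolding parent_def using assms(2) by simp
qed

lemma arc_parent: "v \<in> V \<Longrightarrow> v \<noteq> r \<Longrightarrow> (v, parent v) \<in> E"
  using parent_spec by blast

lemma parent_in_V: "v \<in> V \<Longrightarrow> parent v \<in> V"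
  using arc_parent arcs_in root_in by (cases "v = r") (auto simp: parent_def[of r])

lemma depth_parent:
  assumes "v \<in> V"
  shows "depth (parent v) = depth v - 1"
proof (cases "v = r")
  case False
  have "depth (parent v) \<le> depth v - 1"
    using parent_spec[OF assms False] depth_le by blast
  moreover have "depth v \<le> Suc (depth (parent v))"
    using depth_le relpow_Suc_I2[OF arc_parent relpow_depth] parent_in_V assms False by blast
  ultimately show ?thesis by linarith
qed (simp add: parent_def)

lemma funpow_parent_in_V: "v \<in> V \<Longrightarrow> (parent ^^ t) v \<in> V"
  by (induction t) (auto intro: parent_in_V)

lemma depth_funpow_parent: "v \<in> V \<Longrightarrow> depth ((parent ^^ t) v) = depth v - t"
  by (induction t) (auto simp: depth_parent funpow_parent_in_V)

lemma funpow_parent_eq_root_iff: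
  "v \<in> V \<Longrightarrow> (parent ^^ t) v = r \<longleftrightarrow> depth v \<le> t"
  by (metis depth_eq_0_iff depth_funpow_parent funpow_parent_in_V diff_is_0_eq)

lemma length_tree_path [simp]: "length (tree_path v) = Suc (depth v)"
  by (simp add: tree_path_def)

lemma tree_path_not_Nil [simp]: "tree_path v \<noteq> []"
  by (simp add: tree_path_def del: upt_Suc)

lemma hd_tree_path [simp]: "hd (tree_path v) = v"
  by (simp add: tree_path_def hd_map del: upt_Suc)

lemma last_tree_path: "v \<in> V \<Longrightarrow> last (tree_path v) = r"
  by (simp add: tree_path_def last_map funpow_parent_eq_root_iff del: upt_Suc)

lemma set_tree_path: "set (tree_path v) = {(parent ^^ t) v | t. t \<le> depth v}"
  by (auto simp: tree_path_def less_Suc_eq_le simp del: upt_Suc)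

lemma root_in_tree_path: "v \<in> V \<Longrightarrow> r \<in> set (tree_path v)"
  using last_in_set[OF tree_path_not_Nil] last_tree_path by metis

lemma tree_path_subset_V: "v \<in> V \<Longrightarrow> set (tree_path v) \<subseteq> V"
  by (auto simp: set_tree_path funpow_parent_in_V)

lemma dipath_tree_path:
  assumes "v \<in> V"
  shows "dipath E (tree_path v)"
  unfolding tree_path_def
proof (rule dipath_map_upt)
  show "inj_on (\<lambda>t. (parent ^^ t) v) {0..<Suc (depth v)}"
  proof (rule inj_onI)
    fix s t assume "s \<in> {0..<Suc (depth v)}" "t \<in> {0..<Suc (depth v)}" "(parent ^^ s) v = (parent ^^ t) v"
    then have "depth v - s = depth v - t" "s \<le> depth v" "t \<le> depth v"
      using depth_funpow_parent[OF assms] by (metis, simp_all)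
    then show "s = t" by linarith
  qed
  show "((parent ^^ i) v, (parent ^^ Suc i) v) \<in> E" if "Suc i < Suc (depth v)" for i
  proof -
    have "(parent ^^ i) v \<noteq> r"
      using funpow_parent_eq_root_iff[OF assms] that by simp
    then show ?thesis
      using arc_parent[OF funpow_parent_in_V[OF assms]] by simp
  qed
qed simp

lemma depth_le_if_in_tree_path: "v \<in> V \<Longrightarrow> u \<in> set (tree_path v) \<Longrightarrow> depth u \<le> depth v"
  by (auto simp: set_tree_path depth_funpow_parent)

lemma tree_path_subset:
  assumes "v \<in> V" "u \<in> set (tree_path v)"
  shows "set (tree_path u) \<subseteq> set (tree_path v)"
proof
  fix w assume "w \<in> set (tree_path u)"
  obtain t s where ts: "u = (parent ^^ t) v" "t \<le> depth v" "w = (parent ^^ s) u" "s \<le> depth u"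
    using assms \<open>w \<in> set (tree_path u)\<close> by (auto simp: set_tree_path)
  then have "w = (parent ^^ (s + t)) v"
    by (simp add: funpow_add)
  moreover have "s + t \<le> depth v"
    using ts assms(1) by (simp add: depth_funpow_parent)
  ultimately show "w \<in> set (tree_path v)"
    unfolding set_tree_path by blast
qed

lemma in_tree_path_eq_if_depth_eq:
  assumes "v \<in> V" "u \<in> set (tree_path v)" "w \<in> set (tree_path v)" "depth u = depth w"
  shows "u = w"
proof -
  obtain s t where "u = (parent ^^ s) v" "s \<le> depth v" "w = (parent ^^ t) v" "t \<le> depth v"
    using assms(2,3) by (auto simp: set_tree_path)
  moreover from this have "s = t"
    using assms(1,4) by (simp add: depth_funpow_parent)
  ultimately show ?thesis by simp
qed

lemma butlast_tree_path: "butlast (tree_path v) = map (\<lambda>t. (parent ^^ t) v) [0..<depth v]"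
  by (simp add: tree_path_def)

lemma set_tree_path_conv_butlast:
  assumes "v \<in> V"
  shows "set (tree_path v) = insert r (set (butlast (tree_path v)))"
proof -
  have "tree_path v = butlast (tree_path v) @ [r]"
    using append_butlast_last_id[OF tree_path_not_Nil] last_tree_path[OF assms] by metis
  then show ?thesis
    by (metis set_append empty_set list.simps(15) Un_insert_right sup_bot.right_neutral)
qed

lemma dicycle_root_cycle:
  assumes "v \<in> V" "v \<noteq> r" "(r, v) \<in> E"
  shows "dicycle E (r # butlast (tree_path v))"
proof (rule dicycle_Cons)
  have "0 < depth v"
    using depth_eq_0_iff assms(1,2) by blast
  then show "dipath E (butlast (tree_path v))"
    using dipath_take[OF dipath_tree_path[OF assms(1)], of "depth v"] by (simp add: butlast_conv_take)
  show "r \<notin> set (butlast (tree_path v))"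
    using funpow_parent_eq_root_iff[OF assms(1)] by (auto simp: butlast_tree_path eq_commute[of r])
  show "(r, hd (butlast (tree_path v))) \<in> E"
    using \<open>0 < depth v\<close> assms(3) by (simp add: butlast_tree_path hd_map)
  have "last (butlast (tree_path v)) = (parent ^^ (depth v - 1)) v"
    using \<open>0 < depth v\<close> by (simp add: butlast_tree_path last_map)
  moreover have "parent ((parent ^^ (depth v - 1)) v) = r"
    using funpow_parent_eq_root_iff[OF assms(1), of "depth v"] \<open>0 < depth v\<close>
    by (metis Suc_pred' funpow.simps(2) o_apply order_refl)
  moreover have "(parent ^^ (depth v - 1)) v \<noteq> r"
    using funpow_parent_eq_root_iff[OF assms(1)] \<open>0 < depth v\<close> by simp
  ultimately show "(last (butlast (tree_path v)), r) \<in> E"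
    using arc_parent[OF funpow_parent_in_V[OF assms(1)]] by metis
qed

lemma card_tree_path_lt:
  assumes short: "\<And>C. dicycle E C \<Longrightarrow> card (set C) < n"
    and "v \<in> V" "v \<noteq> r" "(r, v) \<in> E"
  shows "card (set (tree_path v)) < n"
  using short[OF dicycle_root_cycle[OF assms(2-4)]] set_tree_path_conv_butlast[OF assms(2)] by simp

text \<open>Meaningful only if u lies on the tree path of v: it is then the part of that path up to u.\<close>
definition tree_segment :: "'a \<Rightarrow> 'a \<Rightarrow> 'a list" where
  "tree_segment v u = take (Suc (depth v - depth u)) (tree_path v)"

lemma tree_segment_funpow_parent:
  assumes "v \<in> V" "t \<le> depth v"
  shows "tree_segment v ((parent ^^ t) v) = map (\<lambda>i. (parent ^^ i) v) [0..<Suc t]"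
  using assms by (simp add: tree_segment_def tree_path_def depth_funpow_parent take_map del: upt_Suc)

lemma dipath_tree_segment: "v \<in> V \<Longrightarrow> dipath E (tree_segment v u)"
  unfolding tree_segment_def by (simp add: dipath_take dipath_tree_path)

lemma hd_tree_segment [simp]: "hd (tree_segment v u) = v"
  by (simp add: tree_segment_def)

lemma set_tree_segment_subset: "set (tree_segment v u) \<subseteq> set (tree_path v)"
  unfolding tree_segment_def by (rule set_take_subset)

lemma last_tree_segment:
  assumes "v \<in> V" "u \<in> set (tree_path v)"
  shows "last (tree_segment v u) = u"
  using assms by (auto simp: set_tree_path tree_segment_funpow_parent last_map simp del: upt_Suc)

lemma in_tree_path_if_in_tree_segment:
  assumes "v \<in> V" "u \<in> set (tree_path v)" "w \<in> set (tree_segment v u)"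
  shows "u \<in> set (tree_path w)"
proof -
  obtain t where t: "u = (parent ^^ t) v" "t \<le> depth v"
    using assms(2) by (auto simp: set_tree_path)
  then obtain i where i: "w = (parent ^^ i) v" "i \<le> t"
    using assms(1,3) by (auto simp: tree_segment_funpow_parent less_Suc_eq_le simp del: upt_Suc)
  then have "u = (parent ^^ (t - i)) w"
    using t by (simp add: funpow_add[symmetric, THEN fun_cong, simplified])
  moreover have "t - i \<le> depth w"
    using i t assms(1) by (simp add: depth_funpow_parent)
  ultimately show ?thesis
    unfolding set_tree_path by blast
qed

lemma parent_in_tree_path:
  assumes "v \<in> V"
  shows "parent v \<in> set (tree_path v)"
proof (cases "v = r")
  case True
  then show ?thesis
    using hd_in_set[of "tree_path r"] by (simp add: parent_def)
next
  case False
  then have "parent v = (parent ^^ 1) v" "1 \<le> depth v"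
    using depth_eq_0_iff[OF assms] by auto
  then show ?thesis
    unfolding set_tree_path by blast
qed

lemma tree_segment_disjoint_tree_path:
  assumes "y \<in> V" "w \<in> set (tree_path y)" "u \<in> V" "depth u < depth w"
  shows "set (tree_segment y w) \<inter> set (tree_path u) = {}"
proof -
  have "depth u < depth v" if "v \<in> set (tree_segment y w)" for v
  proof -
    have "v \<in> V"
      using that set_tree_segment_subset tree_path_subset_V[OF assms(1)] by blast
    then show ?thesis
      using depth_le_if_in_tree_path in_tree_path_if_in_tree_segment[OF assms(1,2) that] assms(4)
      by fastforce
  qed
  then show ?thesis
    using depth_le_if_in_tree_path[OF assms(3)] by (meson disjoint_iff not_le)
qed

lemma disjoint_tree_segments:
  assumes "y \<in> V" "w \<in> set (tree_path y)" "y' \<in> V" "w' \<in> set (tree_path y')"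
    and "depth w = depth w'" "w \<noteq> w'"
  shows "set (tree_segment y w) \<inter> set (tree_segment y' w') = {}"
proof -
  have "w = w'" if "u \<in> set (tree_segment y w)" "u \<in> set (tree_segment y' w')" for u
  proof (rule in_tree_path_eq_if_depth_eq)
    show "u \<in> V"
      using that(1) set_tree_segment_subset tree_path_subset_V[OF assms(1)] by blast
    show "w \<in> set (tree_path u)" "w' \<in> set (tree_path u)"
      using in_tree_path_if_in_tree_segment assms that by blast+
  qed (rule assms(5))
  then show ?thesis
    using assms(6) by blast
qed

lemma tree_segment_tree_path_parent_subset:
  assumes "v \<in> V" "w \<in> set (tree_path v)"
  shows "insert r (set (tree_segment v w)) \<union> set (tree_path (parent w)) \<subseteq> set (tree_path v)"
proof -
  have "w \<in> V"
    using assms tree_path_subset_V by blast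
  then have "set (tree_path (parent w)) \<subseteq> set (tree_path v)"
    using parent_in_tree_path tree_path_subset assms by (meson subset_trans)
  then show ?thesis
    using set_tree_segment_subset root_in_tree_path[OF assms(1)] by blast
qed

lemma card_tree_paths_le:
  assumes "finite V" and short: "\<And>C. dicycle E C \<Longrightarrow> card (set C) < n"
    and "1 \<le> M" and Y: "Y \<subseteq> E `` {r} - {r}"
    and branching: "\<And>z. card {w \<in> (\<Union>y \<in> Y. set (tree_path y)). 0 < depth w \<and> parent w = z} \<le> M"
  shows "card (\<Union>y \<in> Y. set (tree_path y)) \<le> n * M ^ n"
proof (rule card_le_if_bounded_depth_and_branching[OF _ \<open>1 \<le> M\<close> _ _ _ branching])
  have y: "y \<in> V \<and> y \<noteq> r \<and> (r, y) \<in> E" if "y \<in> Y" for y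
    using that Y arcs_in by auto
  then have S: "(\<Union>y \<in> Y. set (tree_path y)) \<subseteq> V"
    using tree_path_subset_V by blast
  then show "finite (\<Union>y \<in> Y. set (tree_path y))"
    using \<open>finite V\<close> finite_subset by blast
  show "depth v < n" if v: "v \<in> (\<Union>y \<in> Y. set (tree_path y))" for v
  proof -
    obtain y where "y \<in> Y" "v \<in> set (tree_path y)"
      using v by blast
    moreover have "card (set (tree_path y)) = Suc (depth y)"
      using dipath_tree_path y[OF \<open>y \<in> Y\<close>] by (simp add: dipath_def distinct_card)
    moreover have "card (set (tree_path y)) < n"
      using card_tree_path_lt[OF short] y[OF \<open>y \<in> Y\<close>] by blast
    ultimately show ?thesis
      using depth_le_if_in_tree_path y by fastforce
  qed
  show "u = v" if "u \<in> (\<Union>y \<in> Y. set (tree_path y))" "v \<in> (\<Union>y \<in> Y. set (tree_path y))"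
    "depth u = 0" "depth v = 0" for u v
    using that S depth_eq_0_iff by blast
  show "parent v \<in> (\<Union>y \<in> Y. set (tree_path y)) \<and> Suc (depth (parent v)) = depth v"
    if v: "v \<in> (\<Union>y \<in> Y. set (tree_path y))" "0 < depth v" for v
  proof
    obtain y where "y \<in> Y" "v \<in> set (tree_path y)"
      using v by blast
    then have "parent v \<in> set (tree_path y)"
      using parent_in_tree_path tree_path_subset y S v(1) by blast
    then show "parent v \<in> (\<Union>y \<in> Y. set (tree_path y))"
      using \<open>y \<in> Y\<close> by blast
    show "Suc (depth (parent v)) = depth v"
      using depth_parent S v by auto
  qed
qed

lemma many_siblings_of_high_out_degree:
  assumes "finite V" and short: "\<And>C. dicycle E C \<Longrightarrow> card (set C) < n"
    and "1 \<le> M" and big: "n * M ^ n < card (E `` {r} - {r})"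
  obtains z ws where "length ws = Suc M" "distinct ws"
    "\<And>w. w \<in> set ws \<Longrightarrow> w \<noteq> r \<and> parent w = z \<and> (\<exists>y \<in> E `` {r} - {r}. w \<in> set (tree_path y))"
proof -
  define S where "S = (\<Union>y \<in> E `` {r} - {r}. set (tree_path y))"
  have "finite S"
    using \<open>finite V\<close> arcs_in tree_path_subset_V finite_subset by (fastforce simp: S_def)
  have "card (E `` {r} - {r}) \<le> card S"
    using card_mono[OF \<open>finite S\<close>] hd_in_set[OF tree_path_not_Nil]
    by (metis S_def UN_I hd_tree_path subsetI)
  moreover have "card S \<le> n * M ^ n" if "\<And>z. card {w \<in> S. 0 < depth w \<and> parent w = z} \<le> M"
    using card_tree_paths_le[OF \<open>finite V\<close> short \<open>1 \<le> M\<close>, of "E `` {r} - {r}"] that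
    by (simp add: S_def)
  ultimately obtain z where "M < card {w \<in> S. 0 < depth w \<and> parent w = z}"
    using big by (meson le_less_trans not_le)
  then obtain W where W: "W \<subseteq> {w \<in> S. 0 < depth w \<and> parent w = z}" "card W = Suc M"
    by (meson Suc_leI obtain_subset_with_card_n)
  then have "finite W"
    using card.infinite by fastforce
  then obtain ws where ws: "set ws = W" "distinct ws"
    using finite_distinct_list by blast
  show ?thesis
  proof (rule that[of ws z])
    show "length ws = Suc M"
      using ws W(2) distinct_card by metis
    show "w \<noteq> r \<and> parent w = z \<and> (\<exists>y \<in> E `` {r} - {r}. w \<in> set (tree_path y))"
      if "w \<in> set ws" for w
      using that ws(1) W(1) by (auto simp: S_def)
  qed (rule ws(2))
qed

lemma disjoint_tree_segments_of_high_out_degree: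
  assumes "finite V" and short: "\<And>C. dicycle E C \<Longrightarrow> card (set C) < n"
    and "1 \<le> M" and "n * M ^ n < card (E `` {r} - {r})"
  obtains z Bs where "z \<in> V" "length Bs = Suc M"
    "\<And>B. B \<in> set Bs \<Longrightarrow> dipath E B \<and> (r, hd B) \<in> E \<and> (last B, z) \<in> E \<and>
       set B \<inter> set (tree_path z) = {} \<and> card (insert r (set B) \<union> set (tree_path z)) < n"
    "\<And>i j. i < length Bs \<Longrightarrow> j < length Bs \<Longrightarrow> i \<noteq> j \<Longrightarrow> set (Bs ! i) \<inter> set (Bs ! j) = {}"
proof -
  obtain z ws where ws: "length ws = Suc M" "distinct ws"
    and sibling: "\<And>w. w \<in> set ws \<Longrightarrow> w \<noteq> r \<and> parent w = z \<and> (\<exists>y \<in> E `` {r} - {r}. w \<in> set (tree_path y))"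
    using many_siblings_of_high_out_degree[OF assms] by metis
  have "\<forall>w \<in> set ws. \<exists>y. (r, y) \<in> E \<and> y \<noteq> r \<and> w \<in> set (tree_path y)"
    using sibling by blast
  then obtain top where top': "\<forall>w \<in> set ws. (r, top w) \<in> E \<and> top w \<noteq> r \<and> w \<in> set (tree_path (top w))"
    by metis
  have top: "top w \<in> V \<and> (r, top w) \<in> E \<and> top w \<noteq> r \<and> w \<in> set (tree_path (top w))"
    if "w \<in> set ws" for w
    using top' that arcs_in by blast
  have w_V: "w \<in> V" if "w \<in> set ws" for w
    using top[OF that] tree_path_subset_V by blast
  have depth_w: "depth w = Suc (depth z)" if "w \<in> set ws" for w
    using depth_parent depth_eq_0_iff w_V[OF that] sibling[OF that] by force
  have "z \<in> V"
    using ws(1) sibling[of "hd ws"] w_V[of "hd ws"] parent_in_V by (metis hd_in_set list.size(3) nat.distinct(1))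
  define Bs where "Bs = map (\<lambda>w. tree_segment (top w) w) ws"
  show ?thesis
  proof (rule that[OF \<open>z \<in> V\<close>, of Bs])
    show "length Bs = Suc M"
      using ws(1) by (simp add: Bs_def)
    fix B assume "B \<in> set Bs"
    then obtain w where w: "w \<in> set ws" "B = tree_segment (top w) w"
      by (auto simp: Bs_def)
    have "parent w = z"
      using sibling[OF w(1)] by blast
    moreover have "insert r (set B) \<union> set (tree_path (parent w)) \<subseteq> set (tree_path (top w))"
      unfolding w(2) using top[OF w(1)] by (intro tree_segment_tree_path_parent_subset) auto
    ultimately have "insert r (set B) \<union> set (tree_path z) \<subseteq> set (tree_path (top w))"
      by simp
    then have "card (insert r (set B) \<union> set (tree_path z)) \<le> card (set (tree_path (top w)))"
      by (rule card_mono[OF finite_set])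
    then have "card (insert r (set B) \<union> set (tree_path z)) < n"
      using card_tree_path_lt[OF short, of "top w"] top[OF w(1)] by linarith
    then show "dipath E B \<and> (r, hd B) \<in> E \<and> (last B, z) \<in> E \<and>
       set B \<inter> set (tree_path z) = {} \<and> card (insert r (set B) \<union> set (tree_path z)) < n"
      using w top[OF w(1)] arc_parent[OF w_V[OF w(1)]] sibling[OF w(1)] depth_w[OF w(1)] \<open>z \<in> V\<close>
      by (simp add: dipath_tree_segment last_tree_segment tree_segment_disjoint_tree_path)
  next
    fix i j assume "i < length Bs" "j < length Bs" "i \<noteq> j"
    then have "ws ! i \<noteq> ws ! j" "ws ! i \<in> set ws" "ws ! j \<in> set ws"
      using ws by (auto simp: Bs_def nth_eq_iff_index_eq)
    then have "set (tree_segment (top (ws ! i)) (ws ! i)) \<inter> set (tree_segment (top (ws ! j)) (ws ! j)) = {}"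
      using top depth_w by (intro disjoint_tree_segments) auto
    then show "set (Bs ! i) \<inter> set (Bs ! j) = {}"
      using \<open>i < length Bs\<close> \<open>j < length Bs\<close> by (simp add: Bs_def)
  qed
qed

lemma short_dipath_system_of_high_out_degree:
  assumes "finite V" and short: "\<And>C. dicycle E C \<Longrightarrow> card (set C) < n"
    and "1 \<le> M" and "n * M ^ n < card (E `` {r} - {r})"
  shows "\<exists>z m Ps. M \<le> m \<and> dipath_system E r z m 1 Ps \<and> short_system n r z m 1 Ps"
proof -
  obtain z Bs where z: "z \<in> V" and "length Bs = Suc M"
    and Bs: "\<And>B. B \<in> set Bs \<Longrightarrow> dipath E B \<and> (r, hd B) \<in> E \<and> (last B, z) \<in> E \<and>
       set B \<inter> set (tree_path z) = {} \<and> card (insert r (set B) \<union> set (tree_path z)) < n"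
    and disjoint: "\<And>i j. i < length Bs \<Longrightarrow> j < length Bs \<Longrightarrow> i \<noteq> j \<Longrightarrow> set (Bs ! i) \<inter> set (Bs ! j) = {}"
    using disjoint_tree_segments_of_high_out_degree[OF assms] by metis
  have r_notin: "r \<notin> set B" if "B \<in> set Bs" for B
    using Bs[OF that] root_in_tree_path[OF z] by blast
  show ?thesis
  proof (cases "z = r")
    case True
    have "length (r # B) < n" if "B \<in> set Bs" for B
    proof -
      have "length (r # B) = card (insert r (set B))"
        using Bs[OF that] r_notin[OF that] by (simp add: dipath_def distinct_card)
      also have "\<dots> \<le> card (insert r (set B) \<union> set (tree_path z))"
        by (intro card_mono) auto
      finally show ?thesis
        using Bs[OF that] by linarith
    qed
    then have "short_system n r r M 1 (map ((#) r) Bs)"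
      by (rule short_system_of_cycles)
    moreover have "dipath_system E r r M 1 (map ((#) r) Bs)"
      using Bs r_notin disjoint True \<open>1 \<le> M\<close> \<open>length Bs = Suc M\<close>
      by (intro dipath_system_of_cycles) auto
    ultimately show ?thesis
      using True by (intro exI[of _ r] exI[of _ M] exI[of _ "map ((#) r) Bs"]) simp
  next
    case False
    have "dipath_system E r z (Suc M) 1 (map (\<lambda>B. r # B @ [z]) Bs @ [tree_path z])"
      using False \<open>length Bs = Suc M\<close> Bs disjoint dipath_tree_path[OF z] last_tree_path[OF z]
      by (intro dipath_system_of_paths) auto
    moreover have "short_system n r z (Suc M) 1 (map (\<lambda>B. r # B @ [z]) Bs @ [tree_path z])"
      using False \<open>length Bs = Suc M\<close> Bs hd_in_set[OF tree_path_not_Nil, of z]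
      by (intro short_system_of_paths) auto
    ultimately show ?thesis
      by (intro exI[of _ z] exI[of _ "Suc M"] exI[of _ "map (\<lambda>B. r # B @ [z]) Bs @ [tree_path z]"]) simp
  qed
qed

end

section \<open>Chains of dicycles\<close>

lemma dicycle_through_arc:
  assumes "E \<subseteq> V \<times> V" "strongly_connected V E" "(a, b) \<in> E"
  shows "\<exists>C. dicycle E C \<and> a \<in> set C \<and> b \<in> set C"
proof (cases "a = b")
  case True
  then have "dicycle E [a]"
    using assms(3) by (simp add: dicycle_def dipath_def)
  then show ?thesis
    using True by auto
next
  case False
  have "a \<in> V" "b \<in> V"
    using assms(1,3) by auto
  interpret root_reachable V E a
    using assms(1,2) \<open>a \<in> V\<close> by unfold_locales (auto simp: strongly_connected_def)
  have "dicycle E (a # butlast (tree_path b))"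
    using dicycle_root_cycle \<open>b \<in> V\<close> False assms(3) by blast
  moreover have "b \<in> set (a # butlast (tree_path b))"
    using set_tree_path_conv_butlast[OF \<open>b \<in> V\<close>] hd_in_set[OF tree_path_not_Nil, of b] by simp
  ultimately show ?thesis
    by auto
qed

lemma relpow_of_dicycle:
  assumes C: "dicycle E C" and "a \<in> set C" "b \<in> set C"
  shows "\<exists>s < length C. (a, b) \<in> E ^^ s"
proof -
  define l where "l = length C"
  have "0 < l"
    using C by (simp add: l_def dicycle_def dipath_def)
  have arc: "(C ! t, C ! (Suc t mod l)) \<in> E" if "t < l" for t
  proof (cases "Suc t < l")
    case True
    then show ?thesis
      using C by (simp add: l_def dicycle_def dipath_def)
  next
    case False
    then have "Suc t = l"
      using that by simp
    then have "t = length C - 1" "Suc t mod l = 0"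
      by (auto simp: l_def)
    then have "C ! t = last C" "C ! (Suc t mod l) = hd C"
      using \<open>0 < l\<close> by (simp_all add: l_def last_conv_nth hd_conv_nth)
    then show ?thesis
      using C by (simp add: dicycle_def)
  qed
  have walk: "(C ! i, C ! ((i + s) mod l)) \<in> E ^^ s" if "i < l" for i s
  proof (induction s)
    case (Suc s)
    then show ?case
      using arc[of "(i + s) mod l"] \<open>0 < l\<close> by (auto simp: mod_Suc_eq)
  qed (use that in simp)
  obtain i j where ij: "i < l" "a = C ! i" "j < l" "b = C ! j"
    using assms(2,3) by (auto simp: l_def in_set_conv_nth)
  then have "(i + (j + l - i) mod l) mod l = j"
    by (simp add: mod_add_right_eq)
  then have "(a, b) \<in> E ^^ ((j + l - i) mod l)"
    using walk[OF ij(1)] ij by metis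
  then show ?thesis
    using \<open>0 < l\<close> l_def by (meson mod_less_divisor)
qed

definition dicycle_chain :: "('a \<times> 'a) set \<Rightarrow> 'a \<Rightarrow> 'a \<Rightarrow> 'a list list \<Rightarrow> bool" where
  "dicycle_chain E x v Cs \<longleftrightarrow> Cs \<noteq> [] \<and> (\<forall>C \<in> set Cs. dicycle E C) \<and>
     x \<in> set (hd Cs) \<and> v \<in> set (last Cs) \<and> successively (\<lambda>C D. set C \<inter> set D \<noteq> {}) Cs"

lemma dicycle_chain_exists:
  assumes "\<And>a b. (a, b) \<in> E \<Longrightarrow> \<exists>C. dicycle E C \<and> a \<in> set C \<and> b \<in> set C"
    and "(x, v) \<in> E\<^sup>+"
  shows "\<exists>Cs. dicycle_chain E x v Cs"
  using assms(2)
proof (induction rule: trancl_induct)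
  case (base v)
  then obtain C where "dicycle E C" "x \<in> set C" "v \<in> set C"
    using assms(1) by blast
  then have "dicycle_chain E x v [C]"
    by (simp add: dicycle_chain_def)
  then show ?case ..
next
  case (step u v)
  obtain Cs where "dicycle_chain E x u Cs"
    using step.IH ..
  moreover obtain C where "dicycle E C" "u \<in> set C" "v \<in> set C"
    using assms(1) step.hyps(2) by blast
  ultimately have "dicycle_chain E x v (Cs @ [C])"
    by (auto simp: dicycle_chain_def successively_append_iff)
  then show ?case ..
qed

lemma relpow_of_dicycle_chain:
  assumes "dicycle_chain E x v Cs"
  shows "\<exists>s < sum_list (map length Cs). (x, v) \<in> E ^^ s"
  using assms
proof (induction Cs arbitrary: x)
  case (Cons C Cs)
  then have C: "dicycle E C" "x \<in> set C"
    by (auto simp: dicycle_chain_def)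
  show ?case
  proof (cases "Cs = []")
    case True
    then have "v \<in> set C"
      using Cons.prems by (simp add: dicycle_chain_def)
    then show ?thesis
      using relpow_of_dicycle[OF C] True by simp
  next
    case False
    then obtain w where w: "w \<in> set C" "w \<in> set (hd Cs)"
      using Cons.prems by (auto simp: dicycle_chain_def successively_Cons)
    obtain s1 where "s1 < length C" "(x, w) \<in> E ^^ s1"
      using relpow_of_dicycle[OF C w(1)] by blast
    moreover have "dicycle_chain E w v Cs"
      using Cons.prems w(2) False by (simp add: dicycle_chain_def successively_Cons)
    then obtain s2 where "s2 < sum_list (map length Cs)" "(w, v) \<in> E ^^ s2"
      using Cons.IH by blast
    ultimately have "(x, v) \<in> E ^^ (s1 + s2)" "s1 + s2 < sum_list (map length (C # Cs))"
      by (auto simp: relpow_add)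
    then show ?thesis
      by blast
  qed
qed (simp add: dicycle_chain_def)

lemma successively_take: "successively P xs \<Longrightarrow> successively P (take n xs)"
  using successively_append_iff[of P "take n xs" "drop n xs"] by simp

lemma successively_drop: "successively P xs \<Longrightarrow> successively P (drop n xs)"
  using successively_append_iff[of P "take n xs" "drop n xs"] by simp

lemma dicycle_chain_shortcut:
  assumes "dicycle_chain E x v Cs" "i < j" "j < length Cs" "set (Cs ! i) \<inter> set (Cs ! j) \<noteq> {}"
  shows "dicycle_chain E x v (take (Suc i) Cs @ drop j Cs)"
  unfolding dicycle_chain_def
proof (intro conjI)
  let ?P = "\<lambda>C D. set C \<inter> set D \<noteq> {}"
  have "last (take (Suc i) Cs) = Cs ! i" "hd (drop j Cs) = Cs ! j"
    using assms(2,3) by (simp_all add: take_Suc_conv_app_nth hd_drop_conv_nth)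
  moreover have "successively ?P Cs"
    using assms(1) by (simp add: dicycle_chain_def)
  ultimately show "successively ?P (take (Suc i) Cs @ drop j Cs)"
    using assms(4) by (simp add: successively_append_iff successively_take successively_drop)
  show "x \<in> set (hd (take (Suc i) Cs @ drop j Cs))" "v \<in> set (last (take (Suc i) Cs @ drop j Cs))"
    using assms(1-3) by (simp_all add: dicycle_chain_def)
  show "\<forall>C \<in> set (take (Suc i) Cs @ drop j Cs). dicycle E C"
    using assms(1) set_take_subset[of "Suc i" Cs] set_drop_subset[of j Cs]
    by (auto simp: dicycle_chain_def)
qed (use assms(3) in simp)

lemma semi_chain_if_shortest_dicycle_chain:
  assumes chain: "dicycle_chain E x v Cs"
    and shortest: "\<And>Cs'. dicycle_chain E x v Cs' \<Longrightarrow> length Cs \<le> length Cs'"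
  shows "semi_chain E Cs"
proof -
  have adjacent: "j = Suc i"
    if "i < j" "j < length Cs" "set (Cs ! i) \<inter> set (Cs ! j) \<noteq> {}" for i j
  proof (rule ccontr)
    assume "j \<noteq> Suc i"
    then have "length (take (Suc i) Cs @ drop j Cs) < length Cs"
      using that(1,2) by simp
    then show False
      using shortest[OF dicycle_chain_shortcut[OF chain that]] by simp
  qed
  have consecutive: "set (Cs ! i) \<inter> set (Cs ! Suc i) \<noteq> {}" if "Suc i < length Cs" for i
    using chain that by (simp add: dicycle_chain_def successively_conv_nth)
  have "set (Cs ! i) \<inter> set (Cs ! j) \<noteq> {} \<longleftrightarrow> i = Suc j \<or> j = Suc i"
    if "i < length Cs" "j < length Cs" "i \<noteq> j" for i j
  proof (cases "i < j")
    case True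
    then show ?thesis
      using adjacent[of i j] consecutive[of i] that by auto
  next
    case False
    then show ?thesis
      using adjacent[of j i] consecutive[of j] that by (auto simp: Int_commute)
  qed
  then show ?thesis
    using chain by (simp add: semi_chain_def dicycle_chain_def)
qed

lemma semi_chain_take:
  assumes "semi_chain E Cs"
  shows "semi_chain E (take k Cs)"
  using assms set_take_subset[of k Cs] unfolding semi_chain_def by auto

section \<open>Digraphs of bounded out-degree\<close>

lemma relpow_in_V: "E \<subseteq> V \<times> V \<Longrightarrow> x \<in> V \<Longrightarrow> (x, v) \<in> E ^^ s \<Longrightarrow> v \<in> V"
  by (cases s) auto

lemma card_relpow_ball_le:
  assumes "finite V" "E \<subseteq> V \<times> V" "x \<in> V" and deg: "\<And>u. u \<in> V \<Longrightarrow> card (E `` {u}) \<le> D"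
  shows "card {v. \<exists>s < l. (x, v) \<in> E ^^ s} \<le> (D + 1) ^ l"
proof (induction l)
  case (Suc l)
  let ?B = "{v. \<exists>s < l. (x, v) \<in> E ^^ s}"
  have "?B \<subseteq> V"
    using relpow_in_V[OF assms(2,3)] by blast
  moreover have "(\<Union>u \<in> ?B. E `` {u}) \<subseteq> V"
    using assms(2) by blast
  ultimately have fin: "finite ?B" "finite (\<Union>u \<in> ?B. E `` {u})"
    using finite_subset[OF _ assms(1)] by auto
  have "{v. \<exists>s < Suc l. (x, v) \<in> E ^^ s} \<subseteq> insert x (\<Union>u \<in> ?B. E `` {u})"
  proof
    fix v assume "v \<in> {v. \<exists>s < Suc l. (x, v) \<in> E ^^ s}"
    then obtain s where "s < Suc l" "(x, v) \<in> E ^^ s"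
      by blast
    then show "v \<in> insert x (\<Union>u \<in> ?B. E `` {u})"
    proof (cases s)
      case (Suc t)
      then obtain u where "(x, u) \<in> E ^^ t" "(u, v) \<in> E"
        using \<open>(x, v) \<in> E ^^ s\<close> by (auto simp del: relpow.simps elim: relpow_Suc_E)
      moreover have "t < l"
        using \<open>s < Suc l\<close> Suc by simp
      ultimately show ?thesis
        by blast
    qed simp
  qed
  then have "card {v. \<exists>s < Suc l. (x, v) \<in> E ^^ s} \<le> card (insert x (\<Union>u \<in> ?B. E `` {u}))"
    using fin by (intro card_mono) auto
  also have "\<dots> \<le> Suc (card (\<Union>u \<in> ?B. E `` {u}))"
    using fin by (simp add: card_insert_if)
  also have "\<dots> \<le> Suc (\<Sum>u \<in> ?B. card (E `` {u}))"
    using card_UN_le[OF fin(1)] by simp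
  also have "\<dots> \<le> Suc (card ?B * D)"
    using sum_bounded_above[of ?B "\<lambda>u. card (E `` {u})" D] deg \<open>?B \<subseteq> V\<close> by (simp add: subset_iff)
  also have "\<dots> \<le> Suc ((D + 1) ^ l * D)"
    using Suc.IH by simp
  also have "\<dots> \<le> (D + 1) ^ Suc l"
    using one_le_power[of "D + 1" l] by (simp add: algebra_simps)
  finally show ?case .
qed simp

lemma far_vertex_of_bounded_out_degree:
  assumes "finite V" "E \<subseteq> V \<times> V" "x \<in> V" and deg: "\<And>u. u \<in> V \<Longrightarrow> card (E `` {u}) \<le> D"
    and big: "(D + 1) ^ l + 1 < card V"
  obtains v where "v \<in> V" "v \<noteq> x" "\<And>s. s < l \<Longrightarrow> (x, v) \<notin> E ^^ s"
proof -
  define B where "B = {v. \<exists>s < l. (x, v) \<in> E ^^ s}"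
  have "card B \<le> (D + 1) ^ l"
    unfolding B_def using assms(1-3) deg by (rule card_relpow_ball_le)
  have "B \<subseteq> V"
    using relpow_in_V[OF assms(2,3)] by (auto simp: B_def)
  then have "finite B"
    using assms(1) finite_subset by blast
  have "\<not> V \<subseteq> insert x B"
  proof
    assume "V \<subseteq> insert x B"
    then have "card V \<le> card (insert x B)"
      by (rule card_mono[rotated]) (simp add: \<open>finite B\<close>)
    also have "\<dots> \<le> card B + 1"
      by (simp add: card_insert_if \<open>finite B\<close>)
    finally show False
      using \<open>card B \<le> (D + 1) ^ l\<close> big by linarith
  qed
  then show ?thesis
    using that by (auto simp: B_def)
qed

lemma long_semi_chain_to_far_vertex:
  assumes "E \<subseteq> V \<times> V" "strongly_connected V E"
    and short: "\<And>C. dicycle E C \<Longrightarrow> card (set C) < n"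
    and "(x, v) \<in> E\<^sup>+" and far: "\<And>s. s < k * n \<Longrightarrow> (x, v) \<notin> E ^^ s"
  shows "\<exists>Cs. length Cs = k \<and> semi_chain E Cs \<and> narrow n Cs"
proof -
  obtain Cs0 where "dicycle_chain E x v Cs0"
    using dicycle_chain_exists[OF dicycle_through_arc[OF assms(1,2)] assms(4)] by blast
  then obtain Cs where chain: "dicycle_chain E x v Cs"
    and shortest: "\<forall>Cs'. dicycle_chain E x v Cs' \<longrightarrow> length Cs \<le> length Cs'"
    using ex_has_least_nat[of "dicycle_chain E x v" Cs0 length] by blast
  have "length C < n" if "C \<in> set Cs" for C
  proof -
    have "dicycle E C"
      using chain that by (simp add: dicycle_chain_def)
    then show ?thesis
      using short dicycle_length_eq_card by metis
  qed
  then have "sum_list (map length Cs) \<le> length Cs * n"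
    using sum_list_mono[of Cs length "\<lambda>_. n"] by (simp add: sum_list_triv less_imp_le)
  moreover obtain s where "s < sum_list (map length Cs)" "(x, v) \<in> E ^^ s"
    using relpow_of_dicycle_chain[OF chain] by blast
  moreover from this(2) have "k * n \<le> s"
    using far not_le by blast
  ultimately have "k * n < length Cs * n"
    by linarith
  then have "k \<le> length Cs"
    by simp
  have "narrow n Cs"
    using chain short by (simp add: narrow_def dicycle_chain_def)
  then have "narrow n (take k Cs)"
    using \<open>narrow n Cs\<close> by (auto simp: narrow_def dest: in_set_takeD)
  moreover have "semi_chain E (take k Cs)"
    using semi_chain_take semi_chain_if_shortest_dicycle_chain[OF chain shortest[rule_format]] by blast
  ultimately show ?thesis
    using \<open>k \<le> length Cs\<close> by (intro exI[of _ "take k Cs"]) simp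
qed

lemma semi_chain_of_bounded_out_degree:
  assumes "finite V" "E \<subseteq> V \<times> V" "strongly_connected V E"
    and short: "\<And>C. dicycle E C \<Longrightarrow> card (set C) < n"
    and deg: "\<And>u. u \<in> V \<Longrightarrow> card (E `` {u}) \<le> D"
    and big: "(D + 1) ^ (k * n) + 1 < card V"
  shows "\<exists>Cs. length Cs = k \<and> semi_chain E Cs \<and> narrow n Cs"
proof -
  have "V \<noteq> {}"
    using big by auto
  then obtain x where "x \<in> V"
    by blast
  then obtain v where v: "v \<in> V" "v \<noteq> x" "\<And>s. s < k * n \<Longrightarrow> (x, v) \<notin> E ^^ s"
    using far_vertex_of_bounded_out_degree[OF assms(1,2) _ deg big] by metis
  have "(x, v) \<in> E\<^sup>*"
    using assms(3) \<open>x \<in> V\<close> v(1) unfolding strongly_connected_def by blast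
  then have "(x, v) \<in> E\<^sup>+"
    using v(2) by (simp add: rtrancl_eq_or_trancl)
  then show ?thesis
    using long_semi_chain_to_far_vertex[OF assms(2,3) short _ v(3)] by blast
qed

lemma card_le_Suc_card_Diff1: "finite A \<Longrightarrow> card A \<le> Suc (card (A - {x}))"
  by (cases "x \<in> A") (simp_all add: card_Suc_Diff1)

lemma long_dicycle_or_narrow_semi_chain_or_short_system:
  fixes V :: "'a set"
  assumes "finite V" "E \<subseteq> V \<times> V" "strongly_connected V E"
    and "(n * (k * n + 3) ^ n + 2) ^ (k * n) + 2 \<le> card V"
  shows "(\<exists>C. dicycle E C \<and> n \<le> card (set C)) \<or>
       (\<exists>Cs. length Cs = k \<and> semi_chain E Cs \<and> narrow n Cs) \<or>
       (\<exists>x y m Ps. (int k - 1) * int n + 3 \<le> int m \<and>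
          dipath_system E x y m 1 Ps \<and> short_system n x y m 1 Ps)"
proof (cases "\<exists>C. dicycle E C \<and> n \<le> card (set C)")
  case False
  then have short: "\<And>C. dicycle E C \<Longrightarrow> card (set C) < n"
    by (simp add: not_le)
  define M where "M = k * n + 3"
  show ?thesis
  proof (cases "\<exists>x \<in> V. n * M ^ n < card (E `` {x} - {x})")
    case True
    then obtain x where x: "x \<in> V" "n * M ^ n < card (E `` {x} - {x})"
      by blast
    interpret root_reachable V E x
      using assms(2,3) x(1) by unfold_locales (auto simp: strongly_connected_def)
    obtain z m Ps where "M \<le> m" "dipath_system E x z m 1 Ps" "short_system n x z m 1 Ps"
      using short_dipath_system_of_high_out_degree[OF assms(1) short _ x(2)] M_def by auto
    moreover have "int k * int n + 3 \<le> int m"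
      using \<open>M \<le> m\<close> unfolding M_def by (metis of_nat_le_iff of_nat_add of_nat_mult of_nat_numeral)
    then have "(int k - 1) * int n + 3 \<le> int m"
      by (simp add: algebra_simps)
    ultimately show ?thesis
      by blast
  next
    case False
    have deg: "card (E `` {u}) \<le> n * M ^ n + 1" if "u \<in> V" for u
    proof -
      have "E `` {u} \<subseteq> V"
        using assms(2) by blast
      then have "finite (E `` {u})"
        using assms(1) finite_subset by blast
      moreover have "card (E `` {u} - {u}) \<le> n * M ^ n"
        using False that by (simp add: not_less)
      ultimately show ?thesis
        using card_le_Suc_card_Diff1[of "E `` {u}" u] by simp
    qed
    have big: "(n * M ^ n + 1 + 1) ^ (k * n) + 1 < card V"
      using assms(4) unfolding M_def by (simp add: add.assoc)
    show ?thesis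
      using semi_chain_of_bounded_out_degree[OF assms(1-3) short deg big] by blast
  qed
qed blast

theorem theorem3p4:
  shows "\<forall>n k :: nat. \<exists>N :: nat. \<forall>(V :: nat set) (E :: (nat \<times> nat) set).
     finite V \<and> E \<subseteq> V \<times> V \<and> strongly_connected V E \<and> N \<le> card V \<longrightarrow>
       (\<exists>C. dicycle E C \<and> n \<le> card (set C)) \<or>
       (\<exists>Cs. length Cs = k \<and> semi_chain E Cs \<and> narrow n Cs) \<or>
       (\<exists>x y m Ps. (int k - 1) * int n + 3 \<le> int m \<and>
          dipath_system E x y m 1 Ps \<and> short_system n x y m 1 Ps)"
  by (intro allI exI impI, elim conjE, rule long_dicycle_or_narrow_semi_chain_or_short_system)

end
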